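(* Let $T$ be a tree in which every non-leaf vertex has degree 3, and let $S_{in}\uplus S_{out}$ be a partition of the set of leaves of $T$. If $|S_{out}|$ is odd, then $T$ has an independent set $S$ with $S_{in}\subseteq S$ and $S\cap S_{out}=\emptyset$ such that each component of $T-S$ contains at most one leaf of $T$.
   Context: A leaf of $T$ is a vertex of degree at most 1 in $T$ (so a one-vertex tree has its vertex as a leaf). *)

theory Defs
  imports Main
begin

definition simple_graph :: "'a set \<Rightarrow> ('a \<Rightarrow> 'a \<Rightarrow> bool) \<Rightarrow> bool" where
  "simple_graph V E \<longleftrightarrow> finite V \<and> (\<forall>u v. E u v \<longrightarrow> u \<in> V \<and> v \<in> V)
     \<and> (\<forall>u v. E u v \<longrightarrow> E v u) \<and> (\<forall>u. \<not> E u u)"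

definition walk_in :: "'a set \<Rightarrow> ('a \<Rightarrow> 'a \<Rightarrow> bool) \<Rightarrow> 'a list \<Rightarrow> bool" where
  "walk_in W E xs \<longleftrightarrow> xs \<noteq> [] \<and> set xs \<subseteq> W \<and> (\<forall>i. Suc i < length xs \<longrightarrow> E (xs ! i) (xs ! Suc i))"

definition connected_in :: "'a set \<Rightarrow> ('a \<Rightarrow> 'a \<Rightarrow> bool) \<Rightarrow> 'a \<Rightarrow> 'a \<Rightarrow> bool" where
  "connected_in W E u v \<longleftrightarrow> (\<exists>xs. walk_in W E xs \<and> hd xs = u \<and> last xs = v)"

definition is_cycle :: "'a set \<Rightarrow> ('a \<Rightarrow> 'a \<Rightarrow> bool) \<Rightarrow> 'a list \<Rightarrow> bool" where
  "is_cycle V E xs \<longleftrightarrow> walk_in V E xs \<and> distinct xs \<and> length xs \<ge> 3 \<and> E (last xs) (hd xs)"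

definition is_tree :: "'a set \<Rightarrow> ('a \<Rightarrow> 'a \<Rightarrow> bool) \<Rightarrow> bool" where
  "is_tree V E \<longleftrightarrow> simple_graph V E \<and> V \<noteq> {} \<and> (\<forall>u\<in>V. \<forall>v\<in>V. connected_in V E u v)
     \<and> (\<nexists>xs. is_cycle V E xs)"

definition degree :: "'a set \<Rightarrow> ('a \<Rightarrow> 'a \<Rightarrow> bool) \<Rightarrow> 'a \<Rightarrow> nat" where
  "degree V E v = card {u \<in> V. E v u}"

definition leaves :: "'a set \<Rightarrow> ('a \<Rightarrow> 'a \<Rightarrow> bool) \<Rightarrow> 'a set" where
  "leaves V E = {v \<in> V. degree V E v \<le> 1}"

definition independent_set :: "'a set \<Rightarrow> ('a \<Rightarrow> 'a \<Rightarrow> bool) \<Rightarrow> 'a set \<Rightarrow> bool" where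
  "independent_set V E S \<longleftrightarrow> S \<subseteq> V \<and> (\<forall>u\<in>S. \<forall>v\<in>S. \<not> E u v)"

end

theory Submission
  imports Defs
begin

(* Orient each edge uv of T towards v when the component of T - v containing u holds an odd
   number of leaves of S_out; as |S_out| is odd, every edge gets exactly one orientation.
   Let S consist of S_in and the internal vertices all of whose edges point inwards. A leaf of
   S_in sees no leaf of S_out behind it, so every vertex of S is such a sink, and two sinks
   cannot be adjacent. At an internal vertex outside S the three inward counts add up to the
   odd |S_out|, so exactly one of its edges points inwards. Hence a path in T - S leaving a leaf
   of S_out follows the orientation and can never enter another leaf of S_out, whose edge
   points away from it. *)

lemma walk_in_Nil [simp]: "\<not> walk_in W E []"
  by (simp add: walk_in_def)

lemma walk_in_singleton [simp]: "walk_in W E [x] \<longleftrightarrow> x \<in> W"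
  by (simp add: walk_in_def)

lemma walk_in_Cons_Cons [simp]:
  "walk_in W E (x # y # xs) \<longleftrightarrow> x \<in> W \<and> E x y \<and> walk_in W E (y # xs)"
  by (auto simp: walk_in_def All_less_Suc2)

lemma walk_in_subset: "walk_in W E xs \<Longrightarrow> set xs \<subseteq> W"
  by (simp add: walk_in_def)

lemma walk_in_mono: "walk_in W E xs \<Longrightarrow> set xs \<subseteq> W' \<Longrightarrow> walk_in W' E xs"
  by (simp add: walk_in_def)

lemma walk_in_append_iff:
  "walk_in W E (xs @ y # ys) \<longleftrightarrow> walk_in W E (xs @ [y]) \<and> walk_in W E (y # ys)"
proof (induction xs)
  case Nil
  show ?case by (cases ys) auto
next
  case (Cons a xs)
  then show ?case by (cases xs) auto
qed

lemma walk_in_rev: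
  assumes sym: "\<And>a b. E a b \<Longrightarrow> E b a" and walk: "walk_in W E xs"
  shows "walk_in W E (rev xs)"
  using walk
proof (induction xs rule: induct_list012)
  case (3 a b xs)
  then have "walk_in W E (rev xs @ [b])" and "walk_in W E [b, a]"
    using sym by (auto dest: walk_in_subset)
  then show ?case
    using walk_in_append_iff[of W E "rev xs" b "[a]"] by simp
qed simp_all

lemma walk_in_nontrivialE:
  assumes "walk_in W E p" "hd p = v" "last p \<noteq> v"
  obtains y p' where "p = v # y # p'"
proof -
  obtain p' where p': "p = v # p'"
    using assms(1,2) by (cases p) auto
  with assms(3) obtain y p'' where "p' = y # p''"
    by (cases p') auto
  with p' show thesis
    using that by blast
qed

lemma connected_in_refl: "x \<in> W \<Longrightarrow> connected_in W E x x"
  unfolding connected_in_def by (rule exI[of _ "[x]"]) simp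

lemma connected_in_sym:
  "(\<And>a b. E a b \<Longrightarrow> E b a) \<Longrightarrow> connected_in W E u v \<Longrightarrow> connected_in W E v u"
  unfolding connected_in_def by (metis walk_in_rev hd_rev last_rev)

lemma connected_in_trans:
  assumes "connected_in W E u v" "connected_in W E v w"
  shows "connected_in W E u w"
proof -
  obtain xs0 ys0 where xs0: "walk_in W E xs0" "hd xs0 = u" "last xs0 = v"
    and ys0: "walk_in W E ys0" "hd ys0 = v" "last ys0 = w"
    using assms unfolding connected_in_def by blast
  obtain xs ys where xs: "xs0 = xs @ [v]" and ys: "ys0 = v # ys"
    using xs0 ys0 by (cases xs0 rule: rev_cases; cases ys0) auto
  have "walk_in W E (xs @ v # ys)"
    using xs0(1) ys0(1) walk_in_append_iff[of W E xs v ys] unfolding xs ys by simp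
  moreover have "hd (xs @ v # ys) = u"
    using xs0(2) unfolding xs by (cases xs) simp_all
  moreover have "last (xs @ v # ys) = w"
    using ys0(3) unfolding ys by simp
  ultimately show ?thesis
    unfolding connected_in_def by blast
qed

lemma connected_in_subset: "connected_in W E u v \<Longrightarrow> u \<in> W \<and> v \<in> W"
  unfolding connected_in_def walk_in_def by (auto simp: hd_in_set last_in_set subset_iff)

lemma walk_in_imp_connected_in: "walk_in W E xs \<Longrightarrow> connected_in W E (hd xs) (last xs)"
  unfolding connected_in_def by blast

lemma walk_in_shortcut:
  "walk_in W E xs \<Longrightarrow> \<exists>p. walk_in W E p \<and> distinct p \<and> hd p = hd xs \<and> last p = last xs"
proof (induction "length xs" arbitrary: xs rule: less_induct)
  case less
  show ?case
  proof (cases "distinct xs")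
    case False
    then obtain as x bs cs where xs: "xs = as @ [x] @ bs @ [x] @ cs"
      using not_distinct_decomp by blast
    have "walk_in W E (as @ [x])" "walk_in W E (x # cs)"
      using less.prems walk_in_append_iff[of W E as x "bs @ x # cs"]
        walk_in_append_iff[of W E "as @ x # bs" x cs] xs by simp_all
    then have "walk_in W E (as @ x # cs)"
      using walk_in_append_iff[of W E as x cs] by simp
    moreover have "hd (as @ x # cs) = hd xs"
      unfolding xs by (cases as) simp_all
    moreover have "last (as @ x # cs) = last xs"
      unfolding xs by simp
    ultimately show ?thesis
      using less.hyps[of "as @ x # cs"] xs by auto
  qed (use less.prems in blast)
qed

lemma connected_in_imp_distinct_walk:
  assumes "connected_in W E u v"
  obtains p where "walk_in W E p" "distinct p" "hd p = u" "last p = v"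
  using assms walk_in_shortcut unfolding connected_in_def by blast

locale tree =
  fixes V :: "'a set" and E :: "'a \<Rightarrow> 'a \<Rightarrow> bool"
  assumes is_tree: "is_tree V E"
begin

lemma finite_vertices: "finite V"
  using is_tree unfolding is_tree_def simple_graph_def by blast

lemma edge_sym: "E u v \<Longrightarrow> E v u"
  using is_tree unfolding is_tree_def simple_graph_def by blast

lemma edge_irrefl: "\<not> E u u"
  using is_tree unfolding is_tree_def simple_graph_def by blast

lemma edge_in_V: "E u v \<Longrightarrow> u \<in> V" "E u v \<Longrightarrow> v \<in> V"
  using is_tree unfolding is_tree_def simple_graph_def by blast+

lemma connected: "u \<in> V \<Longrightarrow> v \<in> V \<Longrightarrow> connected_in V E u v"
  using is_tree unfolding is_tree_def by blast

lemma no_cycle: "\<not> is_cycle V E xs"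
  using is_tree unfolding is_tree_def by blast

lemma connected_in_commute: "connected_in W E u v \<Longrightarrow> connected_in W E v u"
  using connected_in_sym edge_sym by metis

lemma leaf_neighbour_unique:
  assumes "u \<in> leaves V E" "E u y" "E u z"
  shows "y = z"
proof (rule ccontr)
  assume "y \<noteq> z"
  moreover have "{y, z} \<subseteq> {w \<in> V. E u w}"
    using assms edge_in_V by blast
  ultimately have "2 \<le> card {w \<in> V. E u w}"
    using card_mono[OF _ \<open>{y, z} \<subseteq> _\<close>] finite_vertices by simp
  with assms(1) show False
    unfolding leaves_def degree_def by simp
qed

lemma neighbours_of_degree_3:
  assumes "degree V E b = 3" "E b a" "E b c" "a \<noteq> c"
  obtains z where "{y \<in> V. E b y} = {a, c, z}" "z \<noteq> a" "z \<noteq> c"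
proof -
  let ?N = "{y \<in> V. E b y}"
  have "{a, c} \<subseteq> ?N"
    using assms edge_in_V by blast
  then have "card (?N - {a, c}) = 1"
    using assms finite_vertices by (simp add: card_Diff_subset degree_def)
  then obtain z where "?N - {a, c} = {z}"
    using card_1_singletonE by blast
  with \<open>{a, c} \<subseteq> ?N\<close> show thesis
    using that by blast
qed

lemma neighbours_not_connected_avoiding:
  assumes "E v a" "E v b" "a \<noteq> b"
  shows "\<not> connected_in (V - {v}) E a b"
proof
  assume "connected_in (V - {v}) E a b"
  then obtain r where r: "walk_in (V - {v}) E r" "distinct r" "hd r = a" "last r = b"
    by (rule connected_in_imp_distinct_walk)
  then obtain r' where r': "r = a # r'"
    by (cases r) auto
  with r assms(3) have "r' \<noteq> []"
    by auto
  have r_avoids: "set r \<subseteq> V - {v}"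
    using walk_in_subset[OF r(1)] .
  then have "walk_in V E r"
    using walk_in_mono[OF r(1)] by blast
  then have "walk_in V E (v # r)"
    using r' assms(1) edge_in_V(1) by simp
  moreover have "distinct (v # r)" "3 \<le> length (v # r)" "E (last (v # r)) (hd (v # r))"
    using r r' \<open>r' \<noteq> []\<close> r_avoids assms(2) edge_sym by (auto simp: Suc_le_eq)
  ultimately have "is_cycle V E (v # r)"
    unfolding is_cycle_def by simp
  with no_cycle show False by blast
qed

definition branch :: "'a \<Rightarrow> 'a \<Rightarrow> 'a set" where
  "branch u v = {x. connected_in (V - {v}) E u x}"

lemma branch_subset: "branch u v \<subseteq> V - {v}"
  unfolding branch_def using connected_in_subset by fastforce

lemma self_in_branch: "u \<in> V \<Longrightarrow> u \<noteq> v \<Longrightarrow> u \<in> branch u v"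
  unfolding branch_def by (simp add: connected_in_refl)

lemma branches_disjoint:
  assumes "E v a" "E v b" "a \<noteq> b"
  shows "branch a v \<inter> branch b v = {}"
proof -
  have False if "connected_in (V - {v}) E a x" "connected_in (V - {v}) E b x" for x
    using neighbours_not_connected_avoiding[OF assms]
      connected_in_trans[OF that(1) connected_in_commute[OF that(2)]] by blast
  then show ?thesis
    unfolding branch_def by blast
qed

lemma distinct_walk_in_branch:
  assumes "walk_in V E (v # y # p)" "distinct (v # y # p)"
  shows "last (y # p) \<in> branch y v"
proof -
  have "walk_in (V - {v}) E (y # p)"
    using assms walk_in_subset[OF assms(1)] walk_in_mono[of V E "y # p" "V - {v}"] by auto
  then show ?thesis
    unfolding branch_def using walk_in_imp_connected_in by fastforce
qed

lemma branches_cover: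
  assumes "v \<in> V" "x \<in> V" "x \<noteq> v"
  obtains y where "E v y" "x \<in> branch y v"
proof -
  obtain p where p: "walk_in V E p" "distinct p" "hd p = v" "last p = x"
    using connected[OF assms(1,2)] by (rule connected_in_imp_distinct_walk)
  then obtain y p' where "p = v # y # p'"
    using assms(3) by (auto elim: walk_in_nontrivialE)
  with p show thesis
    using that distinct_walk_in_branch by auto
qed

lemma branch_edge_disjoint:
  assumes "E u v"
  shows "branch u v \<inter> branch v u = {}"
proof (rule ccontr)
  assume "branch u v \<inter> branch v u \<noteq> {}"
  then obtain x where xu: "x \<in> branch u v" and xv: "connected_in (V - {u}) E v x"
    unfolding branch_def by blast
  have "x \<noteq> v"
    using xu branch_subset by blast
  obtain q where q: "walk_in (V - {u}) E q" "distinct q" "hd q = v" "last q = x"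
    using xv by (rule connected_in_imp_distinct_walk)
  then obtain y q' where q': "q = v # y # q'"
    using \<open>x \<noteq> v\<close> by (auto elim: walk_in_nontrivialE)
  have "E v y" "y \<noteq> u"
    using q(1) walk_in_subset[OF q(1)] q' by auto
  have "walk_in V E q"
    using walk_in_mono[OF q(1)] walk_in_subset[OF q(1)] by blast
  then have "x \<in> branch y v"
    using distinct_walk_in_branch[of v y q'] q(2,4) q' by simp
  with \<open>E v y\<close> \<open>y \<noteq> u\<close> show False
    using branches_disjoint[of v u y] xu edge_sym[OF assms] by blast
qed

lemma branch_edge_cover:
  assumes "E u v"
  shows "branch u v \<union> branch v u = V"
proof
  show "branch u v \<union> branch v u \<subseteq> V"
    using branch_subset by blast
  show "V \<subseteq> branch u v \<union> branch v u"
  proof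
    fix x assume "x \<in> V"
    obtain p where p: "walk_in V E p" "distinct p" "hd p = v" "last p = x"
      using connected[OF edge_in_V(2)[OF assms] \<open>x \<in> V\<close>] by (rule connected_in_imp_distinct_walk)
    show "x \<in> branch u v \<union> branch v u"
    proof (cases "u \<in> set p")
      case True
      then obtain ys zs where p_split: "p = ys @ u # zs"
        by (meson split_list)
      have "u \<noteq> v"
        using assms edge_irrefl by blast
      then have "v \<in> set ys"
        using p(3) p_split by (cases ys) auto
      then have "set (u # zs) \<subseteq> V - {v}"
        using p(2) walk_in_subset[OF p(1)] p_split by auto
      moreover have "walk_in V E (u # zs)"
        using p(1) p_split walk_in_append_iff[of V E ys u zs] by simp
      ultimately have "connected_in (V - {v}) E u x"
        using walk_in_imp_connected_in[of "V - {v}" E "u # zs"] p(4) p_split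
        by (simp add: walk_in_mono)
      then show ?thesis
        unfolding branch_def by blast
    next
      case False
      then have "walk_in (V - {u}) E p"
        using p(1) walk_in_subset[OF p(1)] by (auto intro: walk_in_mono)
      then show ?thesis
        unfolding branch_def using walk_in_imp_connected_in p by fastforce
    qed
  qed
qed

lemma leaf_branch:
  assumes "u \<in> leaves V E" "E u y"
  shows "branch u y = {u}"
proof
  show "{u} \<subseteq> branch u y"
    using self_in_branch edge_in_V(1)[OF assms(2)] edge_irrefl assms(2) by fastforce
  show "branch u y \<subseteq> {u}"
  proof
    fix x assume x: "x \<in> branch u y"
    show "x \<in> {u}"
    proof (rule ccontr)
      assume "x \<notin> {u}"
      moreover have "x \<in> V"
        using x branch_subset by blast
      ultimately obtain z where "E u z" "x \<in> branch z u"
        using branches_cover[OF edge_in_V(1)[OF assms(2)]] by blast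
      then have "x \<in> branch y u"
        using leaf_neighbour_unique[OF assms(1) _ assms(2)] by blast
      with x show False
        using branch_edge_disjoint[OF assms(2)] by blast
    qed
  qed
qed

lemma card_branch_edge:
  assumes "E u v" "Q \<subseteq> V"
  shows "card (Q \<inter> branch u v) + card (Q \<inter> branch v u) = card Q"
proof -
  have "finite Q"
    using finite_vertices assms(2) finite_subset by blast
  then have "card ((Q \<inter> branch u v) \<union> (Q \<inter> branch v u))
      = card (Q \<inter> branch u v) + card (Q \<inter> branch v u)"
    using branch_edge_disjoint[OF assms(1)] by (intro card_Un_disjoint) auto
  moreover have "(Q \<inter> branch u v) \<union> (Q \<inter> branch v u) = Q"
    using branch_edge_cover[OF assms(1)] assms(2) by blast
  ultimately show ?thesis
    by simp
qed

lemma sum_card_branches: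
  assumes "v \<in> V" "v \<notin> Q" "Q \<subseteq> V"
  shows "(\<Sum>y\<in>{y \<in> V. E v y}. card (Q \<inter> branch y v)) = card Q"
proof -
  have "finite Q"
    using finite_vertices assms(3) finite_subset by blast
  then have "card (\<Union>y\<in>{y \<in> V. E v y}. Q \<inter> branch y v)
      = (\<Sum>y\<in>{y \<in> V. E v y}. card (Q \<inter> branch y v))"
    using branches_disjoint[of v] finite_vertices by (intro card_UN_disjoint) auto
  moreover have "(\<Union>y\<in>{y \<in> V. E v y}. Q \<inter> branch y v) = Q"
  proof
    show "Q \<subseteq> (\<Union>y\<in>{y \<in> V. E v y}. Q \<inter> branch y v)"
    proof
      fix x assume "x \<in> Q"
      with assms obtain y where "E v y" "x \<in> branch y v"
        using branches_cover[OF assms(1)] by blast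
      with \<open>x \<in> Q\<close> show "x \<in> (\<Union>y\<in>{y \<in> V. E v y}. Q \<inter> branch y v)"
        using edge_in_V(2) by blast
    qed
  qed blast
  ultimately show ?thesis
    by simp
qed

end

locale leaf_partitioned_cubic_tree = tree +
  fixes S_in S_out :: "'a set"
  assumes cubic: "\<forall>v\<in>V. v \<notin> leaves V E \<longrightarrow> degree V E v = 3"
    and leaves_partition: "S_in \<union> S_out = leaves V E" "S_in \<inter> S_out = {}"
    and odd_card_out: "odd (card S_out)"
begin

definition out_count :: "'a \<Rightarrow> 'a \<Rightarrow> nat" where
  "out_count u v = card (S_out \<inter> branch u v)"

definition separator :: "'a set" where
  "separator = S_in \<union> {v \<in> V - leaves V E. \<forall>y. E v y \<longrightarrow> odd (out_count y v)}"

lemma S_out_subset: "S_out \<subseteq> V"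
  using leaves_partition(1) unfolding leaves_def by blast

lemma out_count_edge: "E u v \<Longrightarrow> out_count u v + out_count v u = card S_out"
  unfolding out_count_def using card_branch_edge S_out_subset by blast

lemma odd_out_count_edge_iff: "E u v \<Longrightarrow> odd (out_count u v) \<longleftrightarrow> even (out_count v u)"
  using out_count_edge[of u v] odd_card_out by presburger

lemma out_count_leaf:
  assumes "u \<in> leaves V E" "E u y"
  shows "out_count u y = (if u \<in> S_out then 1 else 0)"
  unfolding out_count_def leaf_branch[OF assms] by simp

lemma odd_out_count_into_separator:
  assumes "v \<in> separator" "E u v"
  shows "odd (out_count u v)"
proof (cases "v \<in> S_in")
  case True
  then have "v \<in> leaves V E" "v \<notin> S_out"
    using leaves_partition by auto
  then have "out_count v u = 0"
    using out_count_leaf edge_sym[OF assms(2)] by simp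
  then show ?thesis
    using odd_out_count_edge_iff[OF assms(2)] by simp
next
  case False
  then show ?thesis
    using assms edge_sym unfolding separator_def by blast
qed

lemma separator_independent: "independent_set V E separator"
proof -
  have "separator \<subseteq> V"
    unfolding separator_def using leaves_partition(1) unfolding leaves_def by blast
  moreover have "\<not> E u v" if "u \<in> separator" "v \<in> separator" for u v
    using odd_out_count_into_separator[OF that(2)] odd_out_count_into_separator[OF that(1)]
      odd_out_count_edge_iff edge_sym by blast
  ultimately show ?thesis
    unfolding independent_set_def by blast
qed

lemma odd_out_count_continues:
  assumes "b \<in> V" "b \<notin> separator" "E a b" "E b c" "a \<noteq> c" "odd (out_count a b)"
  shows "odd (out_count b c)"
proof (rule ccontr)
  assume "\<not> odd (out_count b c)"
  then have odd_c: "odd (out_count c b)"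
    using odd_out_count_edge_iff[OF assms(4)] by simp
  have "b \<notin> leaves V E"
    using leaf_neighbour_unique[OF _ edge_sym[OF assms(3)] assms(4)] assms(5) by blast
  then have "degree V E b = 3"
    using cubic assms(1) by blast
  then obtain z where N: "{y \<in> V. E b y} = {a, c, z}" "z \<noteq> a" "z \<noteq> c"
    using neighbours_of_degree_3 edge_sym[OF assms(3)] assms(4,5) by blast
  have "b \<notin> S_out"
    using \<open>b \<notin> leaves V E\<close> leaves_partition(1) by blast
  then have "out_count a b + out_count c b + out_count z b = card S_out"
    using sum_card_branches[OF assms(1) _ S_out_subset] N assms(5)
    unfolding out_count_def by simp
  then have "odd (out_count a b + out_count c b + out_count z b)"
    using odd_card_out by simp
  with odd_c assms(6) have odd_z: "odd (out_count z b)"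
    by simp
  have "odd (out_count y b)" if "E b y" for y
  proof -
    have "y \<in> {a, c, z}"
      using that edge_in_V(2) N(1) by blast
    then show ?thesis
      using odd_c odd_z assms(6) by blast
  qed
  with assms(1,2) \<open>b \<notin> leaves V E\<close> show False
    unfolding separator_def by blast
qed

lemma odd_out_count_along_walk:
  assumes "walk_in (V - separator) E (a # b # p)" "distinct (a # b # p)" "odd (out_count a b)"
  shows "\<exists>x. E x (last (b # p)) \<and> odd (out_count x (last (b # p)))"
  using assms
proof (induction p arbitrary: a b)
  case Nil
  then show ?case by auto
next
  case (Cons c p)
  then have "odd (out_count b c)"
    using odd_out_count_continues[of b a c] by auto
  with Cons.prems(1,2) show ?case
    using Cons.IH[of b c] by simp
qed

lemma separator_separates_leaves:
  assumes "u \<in> leaves V E" "w \<in> leaves V E" "u \<notin> separator" "w \<notin> separator"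
    and "connected_in (V - separator) E u w"
  shows "u = w"
proof (rule ccontr)
  assume "u \<noteq> w"
  have "u \<in> S_out" "w \<in> S_out"
    using assms(1-4) leaves_partition(1) unfolding separator_def by blast+
  obtain p where p: "walk_in (V - separator) E p" "distinct p" "hd p = u" "last p = w"
    using assms(5) by (rule connected_in_imp_distinct_walk)
  then obtain b p' where p_eq: "p = u # b # p'"
    using \<open>u \<noteq> w\<close> by (auto elim: walk_in_nontrivialE)
  then have "odd (out_count u b)"
    using p(1) out_count_leaf[OF assms(1)] \<open>u \<in> S_out\<close> by simp
  then obtain x where "E x w" "odd (out_count x w)"
    using odd_out_count_along_walk[of u b p'] p p_eq by auto
  moreover have "out_count w x = 1"
    using out_count_leaf[OF assms(2)] \<open>w \<in> S_out\<close> edge_sym \<open>E x w\<close> by simp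
  ultimately show False
    using odd_out_count_edge_iff by fastforce
qed

end

theorem lemma4p32:
  fixes V :: "'a set" and E :: "'a \<Rightarrow> 'a \<Rightarrow> bool" and S_in S_out :: "'a set"
  assumes tree: "is_tree V E"
    and cubic: "\<forall>v\<in>V. v \<notin> leaves V E \<longrightarrow> degree V E v = 3"
    and part: "S_in \<union> S_out = leaves V E" "S_in \<inter> S_out = {}"
    and odd: "odd (card S_out)"
  shows "\<exists>S. independent_set V E S \<and> S_in \<subseteq> S \<and> S \<inter> S_out = {} \<and>
           (\<forall>u\<in>leaves V E. \<forall>w\<in>leaves V E. u \<notin> S \<and> w \<notin> S \<and> connected_in (V - S) E u w \<longrightarrow> u = w)"
proof -
  interpret leaf_partitioned_cubic_tree V E S_in S_out
    using assms by unfold_locales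
  have "S_in \<subseteq> separator" "separator \<inter> S_out = {}"
    using part unfolding separator_def by blast+
  then show ?thesis
    using separator_independent separator_separates_leaves by blast
qed

end
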